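(* The At-least-1 objective is strategyproof against a manipulator $m^+$ (one who can only add edges) over directed networks. That is, for every $k$, every directed social network $G$, every agent $m$ and every manipulation in which $m$ adds outgoing edges $(m,a)\notin E$ (yielding $G^m$), we have \[\min_{P\in O(G^m)} u(m,P)\le\min_{P\in O(G)} u(m,P)\quad\text{and}\quad \max_{P\in O(G^m)} u(m,P)\le\max_{P\in O(G)} u(m,P),\] where $O(\cdot)$ is the set of At-least-1 solutions, $u(m,P)$ is computed in the true network $G$, and both the minimum and maximum over an empty solution set are taken to be $0$.
   Context: Let $A=\{a_1,\dots,a_n\}$ be a finite nonempty set of agents and $G=\langle A,E\rangle$ a directed graph without self-loops (the social network); $N(a)=\{b:(a,b)\in E\}$. For a coalition $C\subseteq A$ with $a\in C$, $u(a,C)=|C\cap N(a)|$. For $0<k\le n$, $\Pi_k$ is the set of partitions of $A$ into exactly $k$ nonempty coalitions; for $P\in\Pi_k$, $u(a,P)=u(a,C)$ where $C\in P$ contains $a$. The At-least-1 objective: $O(G)$ is the set of all $P\in\Pi_k$ such that every agent has utility at least $1$ (utilities computed in the network in question); if no such $P$ exists the instance is infeasible, $O(G)=\emptyset$, and all agents are considered to have utility $0$. A manipulator $m$ of type $m^+$ in a directed network may add only outgoing edges $(m,a)\notin E$, so $N^m(a)=N(a)$ for all $a\ne m$ in the reported network $G^m$. The utility $u(m,P)$ of the manipulator is always computed with respect to his true neighbours in the original $G$. *)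

theory Defs
  imports Main "HOL-Library.Disjoint_Sets"
begin

definition social_network :: "'a set \<Rightarrow> ('a \<times> 'a) set \<Rightarrow> bool" where
  "social_network A E \<longleftrightarrow> finite A \<and> A \<noteq> {} \<and> E \<subseteq> A \<times> A \<and> (\<forall>a. (a, a) \<notin> E)"

definition nbrs :: "('a \<times> 'a) set \<Rightarrow> 'a \<Rightarrow> 'a set" where
  "nbrs E a = {b. (a, b) \<in> E}"

definition util :: "('a \<times> 'a) set \<Rightarrow> 'a \<Rightarrow> 'a set \<Rightarrow> nat" where
  "util E a C = card (C \<inter> nbrs E a)"

definition Pi_k :: "'a set \<Rightarrow> nat \<Rightarrow> 'a set set set" where
  "Pi_k A k = {P. partition_on A P \<and> card P = k}"

definition coalition_of :: "'a set set \<Rightarrow> 'a \<Rightarrow> 'a set" where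
  "coalition_of P a = (THE C. C \<in> P \<and> a \<in> C)"

definition utilP :: "('a \<times> 'a) set \<Rightarrow> 'a \<Rightarrow> 'a set set \<Rightarrow> nat" where
  "utilP E a P = util E a (coalition_of P a)"

definition atleast1 :: "'a set \<Rightarrow> ('a \<times> 'a) set \<Rightarrow> nat \<Rightarrow> 'a set set set" where
  "atleast1 A E k = {P \<in> Pi_k A k. \<forall>a\<in>A. utilP E a P \<ge> 1}"

definition min0 :: "('b \<Rightarrow> nat) \<Rightarrow> 'b set \<Rightarrow> nat" where
  "min0 f S = (if S = {} then 0 else Min (f ` S))"

definition max0 :: "('b \<Rightarrow> nat) \<Rightarrow> 'b set \<Rightarrow> nat" where
  "max0 f S = (if S = {} then 0 else Max (f ` S))"

end

theory Submission
  imports Defs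
begin

text \<open>Adding edges never lowers a utility, so every At-least-1 solution of \<open>G\<close> stays one of
  \<open>G\<^sup>m\<close>. Conversely, the reported edges only change the neighbourhood of \<open>m\<close>, so a solution of
  \<open>G\<^sup>m\<close> in which \<open>m\<close> has true utility at least 1 is already a solution of \<open>G\<close>. Hence the
  additional solutions all give \<open>m\<close> true utility 0, which cannot raise the minimum or the
  maximum.\<close>

lemma finite_atleast1: "finite A \<Longrightarrow> finite (atleast1 A E k)"
proof -
  assume "finite A"
  have "atleast1 A E k \<subseteq> Pow (Pow A)"
    unfolding atleast1_def Pi_k_def partition_on_def by auto
  then show ?thesis using \<open>finite A\<close> by (meson finite_Pow_iff finite_subset)
qed

lemma utilP_mono:
  assumes "E \<subseteq> E'" and "finite (nbrs E' a)"
  shows "utilP E a P \<le> utilP E' a P"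
proof -
  have "nbrs E a \<subseteq> nbrs E' a" using assms(1) unfolding nbrs_def by auto
  then show ?thesis
    unfolding utilP_def util_def by (intro card_mono) (use assms(2) in auto)
qed

lemma utilP_cong_nbrs: "nbrs E' a = nbrs E a \<Longrightarrow> utilP E' a P = utilP E a P"
  unfolding utilP_def util_def by simp

lemma nbrs_eq_if_added_edges_leave_from:
  assumes "E \<subseteq> E'" and "\<forall>(x, y) \<in> E' - E. x = m" and "a \<noteq> m"
  shows "nbrs E' a = nbrs E a"
  using assms unfolding nbrs_def by auto

lemma atleast1_mono:
  assumes "E \<subseteq> E'" and "\<forall>a\<in>A. finite (nbrs E' a)"
  shows "atleast1 A E k \<subseteq> atleast1 A E' k"
proof
  fix P assume "P \<in> atleast1 A E k"
  moreover have "utilP E a P \<le> utilP E' a P" if "a \<in> A" for a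
    using assms that by (intro utilP_mono) auto
  ultimately show "P \<in> atleast1 A E' k"
    unfolding atleast1_def using order_trans by fastforce
qed

lemma atleast1_if_manipulator_satisfied:
  assumes "\<forall>a. a \<noteq> m \<longrightarrow> nbrs E' a = nbrs E a"
    and "P \<in> atleast1 A E' k" and "1 \<le> utilP E m P"
  shows "P \<in> atleast1 A E k"
proof -
  have "1 \<le> utilP E a P" if "a \<in> A" for a
    using assms that utilP_cong_nbrs[of E' a E P] unfolding atleast1_def by (cases "a = m") auto
  then show ?thesis using assms(2) unfolding atleast1_def by simp
qed

lemma min0_le_if_vanishing_outside:
  assumes "finite T" and "S \<subseteq> T" and "\<forall>x\<in>T - S. f x = 0"
  shows "min0 f T \<le> min0 f S"
proof (cases "S = {}")
  case True
  show ?thesis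
  proof (cases "T = {}")
    case False
    then obtain x where "x \<in> T" by blast
    then have "Min (f ` T) \<le> f x" using assms(1) by simp
    moreover have "f x = 0" using \<open>x \<in> T\<close> assms(3) True by simp
    ultimately show ?thesis unfolding min0_def by simp
  qed (simp add: min0_def)
next
  case False
  then have "Min (f ` T) \<le> Min (f ` S)"
    using assms(1,2) by (intro Min_antimono) auto
  then show ?thesis using False assms(2) unfolding min0_def by auto
qed

lemma max0_le_if_vanishing_outside:
  assumes "finite S" and "finite T" and "\<forall>x\<in>T - S. f x = 0"
  shows "max0 f T \<le> max0 f S"
proof (cases "T = {}")
  case False
  then have "Max (f ` T) \<in> f ` T" using assms(2) by (intro Max_in) auto
  then obtain x where x: "x \<in> T" and max_T: "Max (f ` T) = f x" by auto
  show ?thesis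
  proof (cases "x \<in> S")
    case True
    then have "f x \<le> Max (f ` S)" using assms(1) by simp
    then show ?thesis using True False max_T unfolding max0_def by auto
  qed (use x max_T assms(3) False in \<open>simp add: max0_def\<close>)
qed (simp add: max0_def)

theorem theorem3:
  fixes A :: "'a set" and E Em :: "('a \<times> 'a) set" and m :: 'a and k :: nat
  assumes "social_network A E"
    and "m \<in> A"
    and "0 < k" and "k \<le> card A"
    and "E \<subseteq> Em"
    and "\<forall>(x, y) \<in> Em - E. x = m \<and> y \<in> A \<and> y \<noteq> m"
  shows "min0 (utilP E m) (atleast1 A Em k) \<le> min0 (utilP E m) (atleast1 A E k)
       \<and> max0 (utilP E m) (atleast1 A Em k) \<le> max0 (utilP E m) (atleast1 A E k)"
proof -
  have "finite A" and "Em \<subseteq> A \<times> A"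
    using assms(1,2,6) unfolding social_network_def by auto
  then have "\<forall>a\<in>A. finite (nbrs Em a)"
    unfolding nbrs_def by (auto intro: finite_subset[of _ A])
  then have sub: "atleast1 A E k \<subseteq> atleast1 A Em k"
    by (rule atleast1_mono[OF assms(5)])
  have "\<forall>(x, y) \<in> Em - E. x = m" using assms(6) by auto
  then have "\<forall>a. a \<noteq> m \<longrightarrow> nbrs Em a = nbrs E a"
    using nbrs_eq_if_added_edges_leave_from[OF assms(5)] by blast
  then have vanish: "\<forall>P \<in> atleast1 A Em k - atleast1 A E k. utilP E m P = 0"
    using atleast1_if_manipulator_satisfied by (metis DiffE less_one not_less)
  have "finite (atleast1 A E k)" "finite (atleast1 A Em k)"
    using \<open>finite A\<close> finite_atleast1 by auto
  then show ?thesis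
    using sub vanish
    by (simp add: min0_le_if_vanishing_outside max0_le_if_vanishing_outside)
qed

end
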